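(* For every relaxed scenario $\mathscr{S}$, the weak quasi-orthology graph $\mathrm{wQO}(\mathscr{S})$ and the weak orthology graph $\mathrm{wO}(\mathscr{S})$ are cographs.
   Context: All trees are planted phylogenetic trees: a tree $T$ has a distinguished vertex $0_T$ of degree $1$ whose unique neighbor $\rho_T$ is the root, and every vertex other than $0_T$ and the leaves $L(T)$ has at least two children. For $x,y\in V(T)$ write $y\preceq_T x$ if $x$ lies on the path from $0_T$ to $y$; edges are written $uv$ with $v\prec_T u$. The order extends to $V(T)\cup E(T)$: for a vertex $x$ and an edge $e=uv$, $x\preceq_T e$ iff $x\preceq_T v$, and $e\preceq_T x$ iff $u\preceq_T x$; for edges, $uv\preceq_T ab$ iff $v\preceq_T b$. Two elements are comparable if one is $\preceq$ the other. $V^0(T)=V(T)\setminus(L(T)\cup\{0_T\})$; $\mathrm{lca}_T$ denotes the last common ancestor. A time map for $T$ is $\tau_T\colon V(T)\to\mathbb{R}$ with $\tau_T(x)<\tau_T(y)$ whenever $x\prec_T y$. A relaxed scenario $\mathscr{S}=(T,S,\sigma,\mu,\tau_T,\tau_S)$ consists of a gene tree $T$ with time map $\tau_T$, a species tree $S$ with time map $\tau_S$, a map $\sigma\colon L(T)\to M$ with $M\subseteq L(S)$, and a map $\mu\colon V(T)\to V(S)\cup E(S)$ such that (S0) $\mu(x)=0_S$ iff $x=0_T$; (S1) $\mu(x)\in L(S)$ iff $x\in L(T)$, in which case $\mu(x)=\sigma(x)$; (S2) if $\mu(x)\in V(S)$ then $\tau_S(\mu(x))=\tau_T(x)$; (S3)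 if $\mu(x)=uv\in E(S)$ then $\tau_S(v)<\tau_T(x)<\tau_S(u)$. An edge $uv\in E(T)$ is an HGT-edge if $\mu(u)$ and $\mu(v)$ are incomparable in $S$. $\mathrm{wQO}(\mathscr{S})$ has vertex set $L(T)$ and edges $xy$, $x\ne y$, with $\mu(\mathrm{lca}_T(x,y))\in V^0(S)$; $\mathrm{wO}(\mathscr{S})$ has vertex set $L(T)$ and edges $xy$, $x\neq y$, with $\mu(\mathrm{lca}_T(x,y))\in V^0(S)$ and no HGT-edge on the path between $x$ and $y$ in $T$. A cograph is a graph with no induced path on four vertices. *)

theory Defs
  imports Main "HOL.Real"
begin

text \<open>A planted tree is given by a finite vertex set V, a set E of directed edges (u,v)
  where v is a child of u (so v \<prec> u), and the distinguished planted vertex z = 0_T.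
  y below-or-equal x iff (x,y) is in the reflexive transitive closure of E.\<close>

definition planted_phylo_tree :: "'a set \<Rightarrow> ('a \<times> 'a) set \<Rightarrow> 'a \<Rightarrow> bool" where
  "planted_phylo_tree V E z \<longleftrightarrow>
     finite V \<and> E \<subseteq> V \<times> V \<and> z \<in> V \<and>
     (\<forall>u. (u, z) \<notin> E) \<and>
     (\<forall>v \<in> V - {z}. \<exists>!u. (u, v) \<in> E) \<and>
     (\<forall>v \<in> V. (z, v) \<in> E\<^sup>*) \<and>
     card {w. (z, w) \<in> E} = 1 \<and>
     (\<forall>v \<in> V - {z}. {w. (v, w) \<in> E} \<noteq> {} \<longrightarrow> card {w. (v, w) \<in> E} \<ge> 2)"

definition leaves :: "'a set \<Rightarrow> ('a \<times> 'a) set \<Rightarrow> 'a \<Rightarrow> 'a set" where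
  "leaves V E z = {v \<in> V. v \<noteq> z \<and> (\<forall>w. (v, w) \<notin> E)}"

definition inner :: "'a set \<Rightarrow> ('a \<times> 'a) set \<Rightarrow> 'a \<Rightarrow> 'a set" where
  "inner V E z = V - (leaves V E z \<union> {z})"

definition time_map :: "'a set \<Rightarrow> ('a \<times> 'a) set \<Rightarrow> ('a \<Rightarrow> real) \<Rightarrow> bool" where
  "time_map V E \<tau> \<longleftrightarrow> (\<forall>x \<in> V. \<forall>y \<in> V. (y, x) \<in> E\<^sup>+ \<longrightarrow> \<tau> x < \<tau> y)"

definition lca :: "('a \<times> 'a) set \<Rightarrow> 'a \<Rightarrow> 'a \<Rightarrow> 'a" where
  "lca E x y = (THE w. (w, x) \<in> E\<^sup>* \<and> (w, y) \<in> E\<^sup>* \<and>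
       (\<forall>w'. (w', x) \<in> E\<^sup>* \<and> (w', y) \<in> E\<^sup>* \<longrightarrow> (w', w) \<in> E\<^sup>*))"

text \<open>elements of V(S) \<union> E(S)\<close>
datatype 'b loc = Vx 'b | Ed 'b 'b

fun le :: "('b \<times> 'b) set \<Rightarrow> 'b loc \<Rightarrow> 'b loc \<Rightarrow> bool" where
  "le E (Vx x) (Vx y) \<longleftrightarrow> (y, x) \<in> E\<^sup>*"
| "le E (Vx x) (Ed u v) \<longleftrightarrow> (v, x) \<in> E\<^sup>*"
| "le E (Ed u v) (Vx x) \<longleftrightarrow> (x, u) \<in> E\<^sup>*"
| "le E (Ed u v) (Ed a b) \<longleftrightarrow> (b, v) \<in> E\<^sup>*"

definition comparable :: "('b \<times> 'b) set \<Rightarrow> 'b loc \<Rightarrow> 'b loc \<Rightarrow> bool" where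
  "comparable E a b \<longleftrightarrow> le E a b \<or> le E b a"

definition relaxed_scenario ::
  "'a set \<Rightarrow> ('a \<times> 'a) set \<Rightarrow> 'a \<Rightarrow> 'b set \<Rightarrow> ('b \<times> 'b) set \<Rightarrow> 'b \<Rightarrow>
   ('a \<Rightarrow> 'b) \<Rightarrow> ('a \<Rightarrow> 'b loc) \<Rightarrow> ('a \<Rightarrow> real) \<Rightarrow> ('b \<Rightarrow> real) \<Rightarrow> bool" where
  "relaxed_scenario VT ET zT VS ES zS \<sigma> \<mu> \<tau>T \<tau>S \<longleftrightarrow>
     planted_phylo_tree VT ET zT \<and> planted_phylo_tree VS ES zS \<and>
     time_map VT ET \<tau>T \<and> time_map VS ES \<tau>S \<and>
     (\<forall>x \<in> leaves VT ET zT. \<sigma> x \<in> leaves VS ES zS) \<and>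
     (\<forall>x \<in> VT. (\<exists>w \<in> VS. \<mu> x = Vx w) \<or> (\<exists>u v. (u, v) \<in> ES \<and> \<mu> x = Ed u v)) \<and>
     (\<forall>x \<in> VT. \<mu> x = Vx zS \<longleftrightarrow> x = zT) \<and>
     (\<forall>x \<in> VT. (\<exists>l \<in> leaves VS ES zS. \<mu> x = Vx l) \<longleftrightarrow> x \<in> leaves VT ET zT) \<and>
     (\<forall>x \<in> leaves VT ET zT. \<mu> x = Vx (\<sigma> x)) \<and>
     (\<forall>x \<in> VT. \<forall>w. \<mu> x = Vx w \<longrightarrow> \<tau>S w = \<tau>T x) \<and>
     (\<forall>x \<in> VT. \<forall>u v. \<mu> x = Ed u v \<longrightarrow> \<tau>S v < \<tau>T x \<and> \<tau>T x < \<tau>S u)"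

definition hgt_edge :: "('a \<times> 'a) set \<Rightarrow> ('b \<times> 'b) set \<Rightarrow> ('a \<Rightarrow> 'b loc) \<Rightarrow> 'a \<Rightarrow> 'a \<Rightarrow> bool" where
  "hgt_edge ET ES \<mu> u v \<longleftrightarrow> (u, v) \<in> ET \<and> \<not> comparable ES (\<mu> u) (\<mu> v)"

definition on_path :: "('a \<times> 'a) set \<Rightarrow> 'a \<Rightarrow> 'a \<Rightarrow> 'a \<Rightarrow> 'a \<Rightarrow> bool" where
  "on_path ET x y u v \<longleftrightarrow> (u, v) \<in> ET \<and> (((v, x) \<in> ET\<^sup>*) \<noteq> ((v, y) \<in> ET\<^sup>*))"

definition wQO_adj :: "('a \<times> 'a) set \<Rightarrow> 'b set \<Rightarrow> ('b \<times> 'b) set \<Rightarrow> 'b \<Rightarrow> ('a \<Rightarrow> 'b loc) \<Rightarrow> 'a \<Rightarrow> 'a \<Rightarrow> bool" where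
  "wQO_adj ET VS ES zS \<mu> x y \<longleftrightarrow> x \<noteq> y \<and> (\<exists>w \<in> inner VS ES zS. \<mu> (lca ET x y) = Vx w)"

definition wO_adj :: "('a \<times> 'a) set \<Rightarrow> 'b set \<Rightarrow> ('b \<times> 'b) set \<Rightarrow> 'b \<Rightarrow> ('a \<Rightarrow> 'b loc) \<Rightarrow> 'a \<Rightarrow> 'a \<Rightarrow> bool" where
  "wO_adj ET VS ES zS \<mu> x y \<longleftrightarrow> wQO_adj ET VS ES zS \<mu> x y \<and>
     \<not> (\<exists>u v. on_path ET x y u v \<and> hgt_edge ET ES \<mu> u v)"

definition cograph :: "'a set \<Rightarrow> ('a \<Rightarrow> 'a \<Rightarrow> bool) \<Rightarrow> bool" where
  "cograph V adj \<longleftrightarrow> \<not> (\<exists>a \<in> V. \<exists>b \<in> V. \<exists>c \<in> V. \<exists>d \<in> V.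
      distinct [a, b, c, d] \<and> adj a b \<and> adj b c \<and> adj c d \<and>
      \<not> adj a c \<and> \<not> adj b d \<and> \<not> adj a d)"

end

theory Submission
  imports Defs
begin

text \<open>Only the gene tree matters. Two leaves are adjacent in wQO iff their lca carries a
  certain label (its \<open>\<mu>\<close>-image is an inner vertex of the species tree), and any labelling of
  lcas yields a cograph: by the three-point condition, an induced path a-b-c-d would force
  lca(c,d) \<preceq> lca(a,c) \<preceq> lca(a,b) = lca(b,c) = lca(c,d), although lca(a,c) \<noteq> lca(a,b).
  wO is wQO intersected with the transitive relation "no HGT edge lies on the path", and
  such an intersection cannot create an induced path on four vertices.\<close>

lemma cograph_conj_transp:
  assumes "cograph V adj" and "transp R"
  shows "cograph V (\<lambda>x y. adj x y \<and> R x y)"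
  using assms unfolding cograph_def transp_def by meson

lemma transp_no_marked_edge_on_path:
  "transp (\<lambda>x y. \<not> (\<exists>u v. on_path E x y u v \<and> Q u v))"
  unfolding transp_def on_path_def by blast

locale rooted_tree =
  fixes V :: "'a set" and E :: "('a \<times> 'a) set" and r :: 'a
  assumes finite_V: "finite V"
    and edges_subset: "E \<subseteq> V \<times> V"
    and no_parent_root: "(u, r) \<notin> E"
    and unique_parent: "v \<in> V - {r} \<Longrightarrow> \<exists>!u. (u, v) \<in> E"
    and reachable: "v \<in> V \<Longrightarrow> (r, v) \<in> E\<^sup>*"
begin

lemma not_trancl_self_if_reachable: "(r, v) \<in> E\<^sup>* \<Longrightarrow> (v, v) \<notin> E\<^sup>+"
proof (induction rule: rtrancl_induct)
  case base
  show ?case using no_parent_root by (auto dest: tranclD2)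
next
  case (step u v)
  show ?case
  proof
    assume "(v, v) \<in> E\<^sup>+"
    then obtain p where "(v, p) \<in> E\<^sup>*" and "(p, v) \<in> E" by (blast dest: tranclD2)
    moreover have "v \<in> V - {r}" using step.hyps(2) edges_subset no_parent_root by blast
    ultimately have "p = u" using unique_parent step.hyps(2) by blast
    then have "(u, u) \<in> E\<^sup>+" using \<open>(v, p) \<in> E\<^sup>*\<close> step.hyps(2) by (simp add: rtrancl_into_trancl2)
    with step.IH show False by contradiction
  qed
qed

lemma acyclic_edges: "acyclic E"
  unfolding acyclic_def
proof
  fix v
  show "(v, v) \<notin> E\<^sup>+"
  proof
    assume "(v, v) \<in> E\<^sup>+"
    then have "v \<in> V" using edges_subset by (auto dest: tranclD)
    then show False using \<open>(v, v) \<in> E\<^sup>+\<close> reachable not_trancl_self_if_reachable by blast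
  qed
qed

lemma ancestor_antisym: "(a, b) \<in> E\<^sup>* \<Longrightarrow> (b, a) \<in> E\<^sup>* \<Longrightarrow> a = b"
  using acyclic_impl_antisym_rtrancl[OF acyclic_edges] by (auto dest: antisymD)

lemma ancestors_comparable:
  "(w1, x) \<in> E\<^sup>* \<Longrightarrow> (w2, x) \<in> E\<^sup>* \<Longrightarrow> (w1, w2) \<in> E\<^sup>* \<or> (w2, w1) \<in> E\<^sup>*"
proof (induction arbitrary: w2 rule: rtrancl_induct)
  case base
  then show ?case by simp
next
  case (step y x)
  from step.prems show ?case
  proof (cases rule: rtranclE)
    case base
    then show ?thesis using step by (meson rtrancl.rtrancl_into_rtrancl)
  next
    case (step y')
    have "x \<in> V - {r}" using \<open>(y, x) \<in> E\<close> edges_subset no_parent_root by blast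
    then have "y' = y" using unique_parent step \<open>(y, x) \<in> E\<close> by blast
    then show ?thesis using step.IH step by blast
  qed
qed

lemma ex_lowest_common_ancestor:
  assumes "x \<in> V" and "y \<in> V"
  shows "\<exists>w. (w, x) \<in> E\<^sup>* \<and> (w, y) \<in> E\<^sup>* \<and>
           (\<forall>w'. (w', x) \<in> E\<^sup>* \<and> (w', y) \<in> E\<^sup>* \<longrightarrow> (w', w) \<in> E\<^sup>*)"
proof -
  define C where "C = {w. (w, x) \<in> E\<^sup>* \<and> (w, y) \<in> E\<^sup>*}"
  have "finite E" using finite_V edges_subset finite_subset by blast
  then have "wf ((E\<inverse>)\<^sup>+)" using acyclic_edges by (simp add: finite_acyclic_wf_converse wf_trancl)
  moreover have "r \<in> C" using assms reachable by (simp add: C_def)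
  ultimately obtain w where "w \<in> C" and lowest: "\<And>w'. (w, w') \<in> E\<^sup>+ \<Longrightarrow> w' \<notin> C"
    using wfE_min[of "(E\<inverse>)\<^sup>+" r C] by (auto simp: trancl_converse)
  have "(w', w) \<in> E\<^sup>*" if "w' \<in> C" for w'
  proof -
    have "(w', w) \<in> E\<^sup>* \<or> (w, w') \<in> E\<^sup>*"
      using ancestors_comparable \<open>w \<in> C\<close> that unfolding C_def by blast
    then show ?thesis using lowest that by (auto dest: rtranclD)
  qed
  then show ?thesis using \<open>w \<in> C\<close> by (auto simp: C_def)
qed

lemma lca_spec:
  assumes "x \<in> V" and "y \<in> V"
  shows "(lca E x y, x) \<in> E\<^sup>* \<and> (lca E x y, y) \<in> E\<^sup>* \<and>
    (\<forall>w. (w, x) \<in> E\<^sup>* \<and> (w, y) \<in> E\<^sup>* \<longrightarrow> (w, lca E x y) \<in> E\<^sup>*)"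
  unfolding lca_def
  by (rule theI') (use ex_lowest_common_ancestor[OF assms] ancestor_antisym in blast)

lemma lca_commute: "lca E x y = lca E y x"
  unfolding lca_def by (metis (no_types, opaque_lifting))

lemma lca_three_point:
  assumes "x \<in> V" and "y \<in> V" and "u \<in> V"
    and "lca E x u \<noteq> lca E x y" and "lca E x u \<noteq> lca E y u"
  shows "lca E x y = lca E y u \<and> (lca E x y, lca E x u) \<in> E\<^sup>*"
proof -
  define a b c where "a = lca E x y" and "b = lca E x u" and "c = lca E y u"
  have a: "(a, x) \<in> E\<^sup>*" "(a, y) \<in> E\<^sup>*" "\<And>w. (w, x) \<in> E\<^sup>* \<Longrightarrow> (w, y) \<in> E\<^sup>* \<Longrightarrow> (w, a) \<in> E\<^sup>*"
    using lca_spec[OF assms(1,2)] by (auto simp: a_def)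
  have b: "(b, x) \<in> E\<^sup>*" "(b, u) \<in> E\<^sup>*" "\<And>w. (w, x) \<in> E\<^sup>* \<Longrightarrow> (w, u) \<in> E\<^sup>* \<Longrightarrow> (w, b) \<in> E\<^sup>*"
    using lca_spec[OF assms(1,3)] by (auto simp: b_def)
  have c: "(c, y) \<in> E\<^sup>*" "(c, u) \<in> E\<^sup>*" "\<And>w. (w, y) \<in> E\<^sup>* \<Longrightarrow> (w, u) \<in> E\<^sup>* \<Longrightarrow> (w, c) \<in> E\<^sup>*"
    using lca_spec[OF assms(2,3)] by (auto simp: c_def)
  have "b \<noteq> a" "b \<noteq> c" using assms(4,5) by (simp_all add: a_def b_def c_def)
  have "(a, b) \<in> E\<^sup>*"
  proof (rule ccontr)
    assume "(a, b) \<notin> E\<^sup>*"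
    then have "(b, a) \<in> E\<^sup>*" using ancestors_comparable a(1) b(1) by blast
    then have "(b, c) \<in> E\<^sup>*" using c(3) rtrancl_trans a(2) b(2) by metis
    have "(c, a) \<in> E\<^sup>* \<or> (a, c) \<in> E\<^sup>*" using ancestors_comparable a(2) c(1) by blast
    then show False
    proof
      assume "(c, a) \<in> E\<^sup>*"
      then have "(c, b) \<in> E\<^sup>*" using b(3) rtrancl_trans a(1) c(2) by metis
      then show False using \<open>(b, c) \<in> E\<^sup>*\<close> \<open>b \<noteq> c\<close> ancestor_antisym by blast
    next
      assume "(a, c) \<in> E\<^sup>*"
      then have "(a, b) \<in> E\<^sup>*" using b(3) rtrancl_trans a(1) c(2) by metis
      then show False using \<open>(a, b) \<notin> E\<^sup>*\<close> by contradiction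
    qed
  qed
  have "(a, c) \<in> E\<^sup>*" using c(3) rtrancl_trans \<open>(a, b) \<in> E\<^sup>*\<close> a(2) b(2) by metis
  have "(c, b) \<in> E\<^sup>* \<or> (b, c) \<in> E\<^sup>*" using ancestors_comparable b(2) c(2) by blast
  then have "(c, a) \<in> E\<^sup>*"
  proof
    assume "(c, b) \<in> E\<^sup>*"
    then show "(c, a) \<in> E\<^sup>*" using a(3) rtrancl_trans b(1) c(1) by metis
  next
    assume "(b, c) \<in> E\<^sup>*"
    then have "(b, a) \<in> E\<^sup>*" using a(3) rtrancl_trans b(1) c(1) by metis
    then show "(c, a) \<in> E\<^sup>*" using \<open>(a, b) \<in> E\<^sup>*\<close> \<open>b \<noteq> a\<close> ancestor_antisym by blast
  qed
  then show ?thesis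
    using \<open>(a, b) \<in> E\<^sup>*\<close> \<open>(a, c) \<in> E\<^sup>*\<close> ancestor_antisym by (auto simp: a_def b_def c_def)
qed

lemma cograph_lca_labelling:
  assumes "A \<subseteq> V"
  shows "cograph A (\<lambda>x y. x \<noteq> y \<and> P (lca E x y))"
  unfolding cograph_def
proof clarify
  fix a b c d
  assume "a \<in> A" "b \<in> A" "c \<in> A" "d \<in> A" "distinct [a, b, c, d]"
    and P: "P (lca E a b)" "P (lca E b c)" "P (lca E c d)"
    and "\<not> (a \<noteq> c \<and> P (lca E a c))" "\<not> (b \<noteq> d \<and> P (lca E b d))"
      "\<not> (a \<noteq> d \<and> P (lca E a d))"
  then have not_P: "\<not> P (lca E a c)" "\<not> P (lca E b d)" "\<not> P (lca E c a)" "\<not> P (lca E a d)"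
    by (auto simp: lca_commute[of c a])
  have V: "a \<in> V" "b \<in> V" "c \<in> V" "d \<in> V" using assms \<open>a \<in> A\<close> \<open>b \<in> A\<close> \<open>c \<in> A\<close> \<open>d \<in> A\<close> by auto
  have abc: "lca E a b = lca E b c" "(lca E a b, lca E a c) \<in> E\<^sup>*"
    using lca_three_point[OF V(1,2,3)] P not_P by metis+
  have bcd: "lca E b c = lca E c d"
    using lca_three_point[OF V(2,3,4)] P not_P by metis
  have "(lca E c a, lca E c d) \<in> E\<^sup>*"
    using lca_three_point[OF V(3,1,4)] P not_P by metis
  then have "(lca E a c, lca E a b) \<in> E\<^sup>*" using abc(1) bcd by (simp add: lca_commute[of c a])
  then have "lca E a b = lca E a c" using abc(2) ancestor_antisym by blast
  then show False using P(1) not_P(1) by simp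
qed

end

lemma planted_phylo_tree_rooted_tree:
  assumes "planted_phylo_tree V E z"
  shows "rooted_tree V E z"
  using assms unfolding planted_phylo_tree_def by unfold_locales auto

theorem lemma34:
  fixes VT :: "'a set" and ET :: "('a \<times> 'a) set" and zT :: 'a
    and VS :: "'b set" and ES :: "('b \<times> 'b) set" and zS :: 'b
    and \<sigma> :: "'a \<Rightarrow> 'b" and \<mu> :: "'a \<Rightarrow> 'b loc"
    and \<tau>T :: "'a \<Rightarrow> real" and \<tau>S :: "'b \<Rightarrow> real"
  assumes "relaxed_scenario VT ET zT VS ES zS \<sigma> \<mu> \<tau>T \<tau>S"
  shows "cograph (leaves VT ET zT) (wQO_adj ET VS ES zS \<mu>)
       \<and> cograph (leaves VT ET zT) (wO_adj ET VS ES zS \<mu>)"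
proof -
  interpret rooted_tree VT ET zT
    using assms by (simp add: relaxed_scenario_def planted_phylo_tree_rooted_tree)
  have "leaves VT ET zT \<subseteq> VT" by (auto simp: leaves_def)
  then have wQO: "cograph (leaves VT ET zT) (wQO_adj ET VS ES zS \<mu>)"
    unfolding wQO_adj_def[abs_def] by (rule cograph_lca_labelling)
  have "cograph (leaves VT ET zT) (wO_adj ET VS ES zS \<mu>)"
    unfolding wO_adj_def[abs_def] using wQO transp_no_marked_edge_on_path
    by (rule cograph_conj_transp)
  with wQO show ?thesis ..
qed

end
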